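(* Let $(X_n)_{n\ge0}$ be a time-homogeneous Markov chain on $(S,\mathcal S)$ with $m$-step transition probabilities $\mathsf P_x(m,\cdot)$, fix $m\ge1$, and let $V^{(m)}$ be the operator on bounded measurable functions $h$ on $S^2=S\times S$ defined by $$V^{(m)}h(x^1,x^2):=\big(1-\alpha^{(m)}(x^1,x^2)\big)\int_{S^2}h(y)\,K^{(m)}\big((x^1,x^2),dy\big),$$ with operator norm $\|V^{(m)}\|$ taken with respect to the supremum norm. Then for all $x^1,x^2\in S$ and all $n\ge0$, $$\tfrac12\,\|\mu^{x^1}_{nm}-\mu^{x^2}_{nm}\|_{TV}\le\|V^{(m)}\|^n,$$ where $\mu^x_k=\mathsf P_x(k,\cdot)$.
   Context: $S$ is a non-empty topological space with Borel $\sigma$-algebra $\mathcal S$. For $x^1,x^2\in S$, $\alpha^{(m)}(x^1,x^2):=\int\big(\frac{\mathsf P_{x^2}(m,dy)}{\mathsf P_{x^1}(m,dy)}\wedge1\big)\mathsf P_{x^1}(m,dy)$ (ratio = density of the absolutely continuous part), i.e. the total mass of $\mathsf P_{x^1}(m,\cdot)\wedge\mathsf P_{x^2}(m,\cdot)$; note $\alpha^{(m)}(x,x)=1$. $K^{(m)}$ is the $m$-step Markov coupling kernel on $S^2$: from $(x^1,x^2)$ with $x^1\ne x^2$ and $\alpha:=\alpha^{(m)}(x^1,x^2)\in(0,1)$, with probability $\alpha$ both coordinates move to a common point with law $(\mathsf P_{x^1}(m,\cdot)\wedge\mathsf P_{x^2}(m,\cdot))/\alpha$, and with probability $1-\alpha$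 they move independently with laws $(\mathsf P_{x^i}(m,\cdot)-\mathsf P_{x^1}(m,\cdot)\wedge\mathsf P_{x^2}(m,\cdot))/(1-\alpha)$, $i=1,2$ (in the degenerate cases $\alpha\in\{0,1\}$ the corresponding branch is omitted); from a diagonal point $(x,x)$ both coordinates move together with law $\mathsf P_x(m,\cdot)$. $\|\mu-\nu\|_{TV}:=\sup_{A\in\mathcal S}|\mu(A)-\nu(A)|$. *)

theory Defs
  imports "HOL-Probability.Probability"
begin

fun mstep :: "('a::topological_space \<Rightarrow> 'a measure) \<Rightarrow> nat \<Rightarrow> 'a \<Rightarrow> 'a measure" where
  "mstep P 0 x = return borel x"
| "mstep P (Suc k) x = bind (mstep P k x) P"

definition min_measure :: "'a measure \<Rightarrow> 'a measure \<Rightarrow> 'a measure" where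
  "min_measure \<mu> \<nu> = measure_of (space \<mu>) (sets \<mu>)
     (\<lambda>A. \<Sqinter>B\<in>sets \<mu>. emeasure \<mu> (A \<inter> B) + emeasure \<nu> (A - B))"

definition residual_measure :: "'a measure \<Rightarrow> 'a measure \<Rightarrow> 'a measure" where
  "residual_measure \<mu> \<nu> = measure_of (space \<mu>) (sets \<mu>)
     (\<lambda>A. emeasure \<mu> A - emeasure (min_measure \<mu> \<nu>) A)"

definition alpha :: "('a::topological_space \<Rightarrow> 'a measure) \<Rightarrow> nat \<Rightarrow> 'a \<Rightarrow> 'a \<Rightarrow> real" where
  "alpha P m x1 x2 = measure (min_measure (mstep P m x1) (mstep P m x2)) (space borel)"

text \<open>Off the diagonal it is alpha * (common law pushed to the diagonal)
  + (1-alpha) * (product of the normalised residual laws), written unnormalised;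
  the branch with weight 0 is omitted.\<close>
definition Kcoup :: "('a::topological_space \<Rightarrow> 'a measure) \<Rightarrow> nat \<Rightarrow> 'a \<times> 'a \<Rightarrow> ('a \<times> 'a) measure" where
  "Kcoup P m z = (let x1 = fst z; x2 = snd z in
     if x1 = x2 then distr (mstep P m x1) (borel \<Otimes>\<^sub>M borel) (\<lambda>y. (y, y))
     else
       (let \<mu>1 = mstep P m x1; \<mu>2 = mstep P m x2; a = alpha P m x1 x2;
            c = min_measure \<mu>1 \<mu>2 in
        measure_of (space (borel \<Otimes>\<^sub>M borel)) (sets (borel \<Otimes>\<^sub>M borel))
          (\<lambda>C. (if a > 0 then emeasure (distr c (borel \<Otimes>\<^sub>M borel) (\<lambda>y. (y, y))) C else 0)
              + (if a < 1 then ennreal (1 / (1 - a)) *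
                   emeasure (residual_measure \<mu>1 \<mu>2 \<Otimes>\<^sub>M residual_measure \<mu>2 \<mu>1) C
                 else 0))))"

definition Vop :: "('a::topological_space \<Rightarrow> 'a measure) \<Rightarrow> nat \<Rightarrow> ('a \<times> 'a \<Rightarrow> real) \<Rightarrow> 'a \<times> 'a \<Rightarrow> real" where
  "Vop P m h z = (1 - alpha P m (fst z) (snd z)) * integral\<^sup>L (Kcoup P m z) h"

definition Vnorm :: "('a::topological_space \<Rightarrow> 'a measure) \<Rightarrow> nat \<Rightarrow> real" where
  "Vnorm P m = Sup {\<bar>Vop P m h z\<bar> | h z.
      h \<in> borel_measurable (borel \<Otimes>\<^sub>M borel) \<and> (\<forall>y. \<bar>h y\<bar> \<le> 1)}"

definition tv :: "'a::topological_space measure \<Rightarrow> 'a measure \<Rightarrow> real" where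
  "tv \<mu> \<nu> = Sup {\<bar>measure \<mu> A - measure \<nu> A\<bar> | A. A \<in> sets (borel :: 'a measure)}"

end

theory Submission
  imports Defs
begin

text \<open>
  Let \<open>\<delta>\<close> bound the total variation distance between any two \<open>m\<close>-step laws. Off the diagonal,
  \<open>tv(P\<^sub>x\<^sub>1(m), P\<^sub>x\<^sub>2(m)) \<le> 1 - \<alpha>(x\<^sub>1,x\<^sub>2)\<close> (the two laws differ only by residuals of
  mass \<open>1 - \<alpha>\<close>), and since the coupling kernel is a probability kernel,
  \<open>1 - \<alpha>(x\<^sub>1,x\<^sub>2) = V 1 (x\<^sub>1,x\<^sub>2) \<le> \<parallel>V\<parallel>\<close>; so \<open>\<delta> = \<parallel>V\<parallel>\<close> works. By Chapman-Kolmogorov the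
  \<open>(n+1)m\<close>-step laws are the \<open>nm\<close>-step laws followed by one \<open>m\<close>-step transition, and Dobrushin's
  contraction \<open>tv(\<mu>Q, \<nu>Q) \<le> \<delta> tv(\<mu>, \<nu>)\<close> (integrate a function of oscillation \<open>\<delta>\<close> against
  \<open>\<mu> - \<nu>\<close>, splitting along the set where the density of \<open>\<mu>\<close> exceeds that of \<open>\<nu>\<close>) gives
  \<open>tv \<le> \<parallel>V\<parallel>\<^sup>n\<close> by induction, starting from \<open>tv \<le> 1\<close>.
\<close>

lemma mstep_measurable:
  assumes P: "P \<in> borel \<rightarrow>\<^sub>M prob_algebra borel"
  shows "mstep P k \<in> borel \<rightarrow>\<^sub>M prob_algebra borel"
proof (induction k)
  case 0
  have "mstep P 0 = return borel" by (rule ext) simp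
  then show ?case by simp
next
  case (Suc k)
  have "mstep P (Suc k) = (\<lambda>x. bind (mstep P k x) P)" by (rule ext) simp
  then show ?case using measurable_bind_prob_space[OF Suc P] by simp
qed

lemma mstep_in_prob_algebra:
  assumes P: "P \<in> borel \<rightarrow>\<^sub>M prob_algebra borel"
  shows "mstep P k x \<in> space (prob_algebra borel)"
  using measurable_space[OF mstep_measurable[OF P]] by simp

lemma
  assumes P: "P \<in> borel \<rightarrow>\<^sub>M prob_algebra borel"
  shows prob_space_mstep: "prob_space (mstep P k x)"
    and sets_mstep: "sets (mstep P k x) = sets borel"
  using mstep_in_prob_algebra[OF P] by (auto simp: space_prob_algebra)

lemma space_mstep:
  assumes P: "P \<in> borel \<rightarrow>\<^sub>M prob_algebra borel"
  shows "space (mstep P k x) = space borel"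
  using sets_eq_imp_space_eq[OF sets_mstep[OF P]] .

lemma mstep_add:
  assumes P: "P \<in> borel \<rightarrow>\<^sub>M prob_algebra borel"
  shows "mstep P (a + b) x = bind (mstep P a x) (mstep P b)"
proof (induction b)
  case 0
  have "mstep P 0 = return borel" by (rule ext) simp
  then show ?case using bind_return''[OF sets_mstep[OF P]] by simp
next
  case (Suc b)
  have "mstep P (a + Suc b) x = bind (bind (mstep P a x) (mstep P b)) P"
    using Suc by simp
  also have "\<dots> = bind (mstep P a x) (\<lambda>y. bind (mstep P b y) P)"
  proof (rule bind_assoc)
    show "mstep P b \<in> mstep P a x \<rightarrow>\<^sub>M subprob_algebra borel"
      using measurable_prob_algebraD[OF mstep_measurable[OF P]]
      by (subst measurable_cong_sets[OF sets_mstep[OF P] refl])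
    show "P \<in> borel \<rightarrow>\<^sub>M subprob_algebra borel"
      using measurable_prob_algebraD[OF P] .
  qed
  finally show ?case by simp
qed

lemma abs_measure_diff_le_1:
  assumes "prob_space \<mu>" "prob_space \<nu>"
  shows "\<bar>measure \<mu> A - measure \<nu> A\<bar> \<le> 1"
proof -
  have "0 \<le> measure \<mu> A" "measure \<mu> A \<le> 1" "0 \<le> measure \<nu> A" "measure \<nu> A \<le> 1"
    using assms by (auto simp: prob_space.prob_le_1)
  then show ?thesis by linarith
qed

lemma tv_bdd_above:
  assumes "prob_space \<mu>" "prob_space \<nu>"
  shows "bdd_above {\<bar>measure \<mu> A - measure \<nu> A\<bar> | A. A \<in> sets (borel :: 'a::topological_space measure)}"
  using abs_measure_diff_le_1[OF assms] by (intro bdd_aboveI[where M=1]) blast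

lemma abs_measure_diff_le_tv:
  assumes "prob_space \<mu>" "prob_space \<nu>" "A \<in> sets (borel :: 'a::topological_space measure)"
  shows "\<bar>measure \<mu> A - measure \<nu> A\<bar> \<le> tv \<mu> \<nu>"
  unfolding tv_def by (rule cSup_upper[OF _ tv_bdd_above[OF assms(1,2)]]) (use assms(3) in blast)

lemma tv_le:
  assumes "\<And>A. A \<in> sets (borel :: 'a::topological_space measure) \<Longrightarrow> \<bar>measure \<mu> A - measure \<nu> A\<bar> \<le> c"
  shows "tv \<mu> \<nu> \<le> c"
  unfolding tv_def by (rule cSup_least) (use assms in auto)

lemma tv_nonneg:
  assumes "prob_space \<mu>" "prob_space \<nu>"
  shows "0 \<le> tv \<mu> (\<nu> :: 'a::topological_space measure)"
  using abs_measure_diff_le_tv[OF assms, of "{}"] by simp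

lemma tv_le_1:
  assumes "prob_space \<mu>" "prob_space \<nu>"
  shows "tv \<mu> (\<nu> :: 'a::topological_space measure) \<le> 1"
  by (intro tv_le abs_measure_diff_le_1[OF assms])

lemma measure_of_eqI:
  assumes "sets D = sets M" and "\<And>A. A \<in> sets M \<Longrightarrow> F A = emeasure D A"
  shows "measure_of (space M) (sets M) F = D"
proof -
  have "measure_of (space M) (sets M) F = measure_of (space M) (sets M) (emeasure D)"
    by (rule measure_of_eq) (auto simp: sets.sigma_sets_eq assms(2) sets.space_closed)
  also have "\<dots> = measure_of (space D) (sets D) (emeasure D)"
    using assms(1) sets_eq_imp_space_eq[OF assms(1)] by simp
  finally show ?thesis by (simp add: measure_of_of_measure)
qed

lemma emeasure_measure_of_linear_combination:
  assumes "sets D1 = sets M" and "sets D2 = sets M" and "C \<in> sets M"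
  shows "emeasure (measure_of (space M) (sets M) (\<lambda>C. s * emeasure D1 C + t * emeasure D2 C)) C
    = s * emeasure D1 C + t * emeasure D2 C"
proof (rule emeasure_measure_of_sigma[OF sets.sigma_algebra_axioms _ _ assms(3)])
  show "positive (sets M) (\<lambda>C. s * emeasure D1 C + t * emeasure D2 C)"
    unfolding positive_def by simp
  show "countably_additive (sets M) (\<lambda>C. s * emeasure D1 C + t * emeasure D2 C)"
    unfolding countably_additive_def
  proof (intro allI impI)
    fix A :: "nat \<Rightarrow> _" assume "range A \<subseteq> sets M" and "disjoint_family A"
    then show "(\<Sum>i. s * emeasure D1 (A i) + t * emeasure D2 (A i))
        = s * emeasure D1 (\<Union>(A ` UNIV)) + t * emeasure D2 (\<Union>(A ` UNIV))"
      using suminf_emeasure[of A D1] suminf_emeasure[of A D2] assms(1,2)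
      by (simp add: suminf_add[symmetric] summableI)
  qed
qed

lemma emeasure_density_space:
  assumes "integrable M h" "\<And>x. 0 \<le> h x"
  shows "emeasure (density M (\<lambda>x. ennreal (h x))) (space M) = ennreal (\<integral>x. h x \<partial>M)"
  using assms by (simp add: emeasure_density nn_integral_eq_integral)

lemma abs_integral_le_1:
  assumes "prob_space M" and "\<And>y. \<bar>h y\<bar> \<le> (1::real)"
  shows "\<bar>integral\<^sup>L M h\<bar> \<le> 1"
proof (cases "integrable M h")
  case True
  then show ?thesis
    using assms prob_space.integral_le_const[of M h 1] prob_space.integral_ge_const[of M h "-1"]
    by (auto simp: abs_le_iff)
qed (simp add: not_integrable_integral_eq)

lemma emeasure_diagonal_space:
  assumes "sets c = sets (borel :: 'a::topological_space measure)"
  shows "emeasure (distr c (borel \<Otimes>\<^sub>M borel) (\<lambda>y::'a. (y, y))) (space (borel \<Otimes>\<^sub>M borel))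
    = emeasure c (space c)"
proof -
  have "(\<lambda>y. (y, y)) \<in> c \<rightarrow>\<^sub>M (borel \<Otimes>\<^sub>M borel :: ('a \<times> 'a) measure)"
    by (subst measurable_cong_sets[OF assms refl]) measurable
  then have "emeasure (distr c (borel \<Otimes>\<^sub>M borel) (\<lambda>y::'a. (y, y))) (space (borel \<Otimes>\<^sub>M borel))
      = emeasure c ((\<lambda>y. (y, y)) -` space (borel \<Otimes>\<^sub>M borel) \<inter> space c)"
    by (rule emeasure_distr) simp
  also have "(\<lambda>y. (y, y)) -` space (borel \<Otimes>\<^sub>M borel) \<inter> space c = space c"
    by (auto simp: space_pair_measure)
  finally show ?thesis .
qed

lemma emeasure_pair_measure_space:
  assumes "finite_measure N"
  shows "emeasure (M \<Otimes>\<^sub>M N) (space (M \<Otimes>\<^sub>M N)) = emeasure M (space M) * emeasure N (space N)"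
proof -
  interpret N: finite_measure N by fact
  show ?thesis by (simp add: space_pair_measure N.emeasure_pair_measure_Times)
qed

lemma bounded_oscillation_interval:
  fixes h :: "'a \<Rightarrow> real"
  assumes oscillation: "\<And>y1 y2. \<bar>h y1 - h y2\<bar> \<le> d"
  obtains c where "\<And>x. c \<le> h x" "\<And>x. h x \<le> c + d"
proof
  have "h undefined - d \<le> h x" for x
    using oscillation[of undefined x] by (simp add: abs_le_iff)
  then have "bdd_below (range h)" by (intro bdd_belowI) auto
  then show "Inf (range h) \<le> h x" for x by (simp add: cInf_lower)
  have "h x - d \<le> h y" for x y
    using oscillation[of x y] by (simp add: abs_le_iff)
  then have "h x - d \<le> Inf (range h)" for x by (intro cInf_greatest) auto
  then show "h x \<le> Inf (range h) + d" for x by (simp add: algebra_simps)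
qed

lemma density_enn2real_RN_deriv:
  assumes K: "density L (RN_deriv L K) = K" and "finite_measure K"
  shows "density L (\<lambda>x. ennreal (enn2real (RN_deriv L K x))) = K"
proof -
  have "integral\<^sup>N L (RN_deriv L K) = emeasure (density L (RN_deriv L K)) (space L)"
    by (simp add: emeasure_density)
  also have "\<dots> \<noteq> \<infinity>" unfolding K using finite_measure.emeasure_finite[OF assms(2)] by simp
  finally have "AE x in L. RN_deriv L K x \<noteq> \<infinity>" by (intro nn_integral_PInf_AE) auto
  then have "density L (\<lambda>x. ennreal (enn2real (RN_deriv L K x))) = density L (RN_deriv L K)"
    by (intro density_cong) (auto elim!: AE_mp intro!: AE_I2 simp: ennreal_enn2real_if)
  then show ?thesis using K by simp
qed

lemma finite_measures_common_densities:
  assumes M: "finite_measure M" and N: "finite_measure N" and sets_N: "sets N = sets M"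
  obtains L f g where "finite_measure L" "sets L = sets M"
    "f \<in> borel_measurable L" "g \<in> borel_measurable L" "\<And>x. f x \<ge> 0" "\<And>x. g x \<ge> 0"
    "M = density L (\<lambda>x. ennreal (f x))" "N = density L (\<lambda>x. ennreal (g x))"
proof -
  define L where "L = sup_measure' M N"
  have sets_L: "sets L = sets M" unfolding L_def using sets_N by simp
  have space_L: "space L = space M" unfolding L_def using sets_N by simp
  have "emeasure L (space L) \<le> emeasure M (space M) + emeasure N (space M)"
    unfolding space_L unfolding L_def
  proof (subst emeasure_sup_measure'[OF sets_N], simp, rule SUP_least)
    fix Y assume "Y \<in> sets M"
    show "emeasure M (space M \<inter> Y) + emeasure N (space M \<inter> - Y)
        \<le> emeasure M (space M) + emeasure N (space M)"
      by (intro add_mono emeasure_mono) (auto simp: sets_N)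
  qed
  also have "\<dots> < \<infinity>"
    using finite_measure.emeasure_finite[OF M] finite_measure.emeasure_finite[OF N]
    by (simp add: less_top)
  finally have "finite_measure L" by (intro finite_measureI) simp
  then interpret L: finite_measure L .
  have dominated: "absolutely_continuous L K"
    if "sets K = sets M" "\<And>X. X \<in> sets M \<Longrightarrow> emeasure K X \<le> emeasure L X" for K
    unfolding absolutely_continuous_def
  proof
    fix X assume "X \<in> null_sets L"
    then show "X \<in> null_sets K"
      using that sets_L by (auto simp: null_sets_def) (metis le_zero_eq)
  qed
  have density_M: "density L (RN_deriv L M) = M"
    by (rule L.density_RN_deriv[OF dominated])
      (auto simp: sets_L sets_N L_def intro: le_emeasure_sup_measure'1[OF sets_N])
  have density_N: "density L (RN_deriv L N) = N"
    by (rule L.density_RN_deriv[OF dominated])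
      (auto simp: sets_L sets_N L_def intro: le_emeasure_sup_measure'2[OF sets_N])
  show ?thesis
    by (rule that[OF L.finite_measure_axioms sets_L _ _ _ _
          density_enn2real_RN_deriv[OF density_M M, symmetric] density_enn2real_RN_deriv[OF density_N N, symmetric]]) auto
qed

lemma sets_min_measure: "sets (min_measure \<mu> \<nu>) = sets \<mu>"
  by (simp add: min_measure_def)

lemma space_min_measure: "space (min_measure \<mu> \<nu>) = space \<mu>"
  by (simp add: min_measure_def)

lemma sets_residual_measure: "sets (residual_measure \<mu> \<nu>) = sets \<mu>"
  by (simp add: residual_measure_def)

lemma space_residual_measure: "space (residual_measure \<mu> \<nu>) = space \<mu>"
  by (simp add: residual_measure_def)

locale two_densities =
  fixes L :: "'a measure" and f g :: "'a \<Rightarrow> real" and \<mu> \<nu> :: "'a measure"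
  assumes f_measurable[measurable]: "f \<in> borel_measurable L"
    and g_measurable[measurable]: "g \<in> borel_measurable L"
    and f_nonneg: "\<And>x. f x \<ge> 0" and g_nonneg: "\<And>x. g x \<ge> 0"
    and mu: "\<mu> = density L (\<lambda>x. ennreal (f x))" and nu: "\<nu> = density L (\<lambda>x. ennreal (g x))"
    and prob_mu: "prob_space \<mu>" and prob_nu: "prob_space \<nu>"
begin

lemma swap: "two_densities L g f \<nu> \<mu>"
  by (rule two_densities.intro) (use g_nonneg f_nonneg mu nu prob_mu prob_nu in auto)

lemma sets_mu: "sets \<mu> = sets L"
  by (simp add: mu)

lemma integrable_f: "integrable L f"
  using finite_measure.integrable_const[OF prob_space.finite_measure[OF prob_mu], of "1::real"]
  by (simp add: mu integrable_density f_nonneg)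

lemma integrable_g: "integrable L g"
  using finite_measure.integrable_const[OF prob_space.finite_measure[OF prob_nu], of "1::real"]
  by (simp add: nu integrable_density g_nonneg)

lemma integrable_density_mult_bounded:
  assumes h: "h \<in> borel_measurable L" and bounded: "\<And>x. \<bar>h x\<bar> \<le> K" and k: "k \<in> {f, g}"
  shows "integrable L (\<lambda>x. k x * h x)"
proof (rule Bochner_Integration.integrable_bound[where f="\<lambda>x. k x * K"])
  show "integrable L (\<lambda>x. k x * K)" using integrable_f integrable_g k by auto
  show "(\<lambda>x. k x * h x) \<in> borel_measurable L" using k h by auto
  have "0 \<le> k x" for x using f_nonneg g_nonneg k by auto
  then show "AE x in L. norm (k x * h x) \<le> norm (k x * K)"
    using bounded order.trans[OF abs_ge_zero bounded]
    by (intro AE_I2) (simp add: abs_mult mult_left_mono)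
qed

lemma integral_mu: "h \<in> borel_measurable L \<Longrightarrow> integral\<^sup>L \<mu> h = (\<integral>x. f x * h x \<partial>L)"
  unfolding mu by (subst integral_density) (auto simp: f_nonneg)

lemma integral_nu: "h \<in> borel_measurable L \<Longrightarrow> integral\<^sup>L \<nu> h = (\<integral>x. g x * h x \<partial>L)"
  unfolding nu by (subst integral_density) (auto simp: g_nonneg)

lemma measure_mu: "A \<in> sets L \<Longrightarrow> measure \<mu> A = (\<integral>x. f x * indicator A x \<partial>L)"
  using integral_mu[of "indicator A"] sets.sets_into_space[of A L]
  by (simp add: mu Int_absorb2)

lemma measure_nu: "A \<in> sets L \<Longrightarrow> measure \<nu> A = (\<integral>x. g x * indicator A x \<partial>L)"
  using integral_nu[of "indicator A"] sets.sets_into_space[of A L]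
  by (simp add: nu Int_absorb2)

lemma integral_f: "(\<integral>x. f x \<partial>L) = 1"
  using integral_mu[of "\<lambda>x. 1"] prob_space.prob_space[OF prob_mu] by simp

lemma integral_g: "(\<integral>x. g x \<partial>L) = 1"
  using integral_nu[of "\<lambda>x. 1"] prob_space.prob_space[OF prob_nu] by simp

lemma integral_diff_le_oscillation:
  assumes h: "h \<in> borel_measurable L" and "\<And>x. c \<le> h x" "\<And>x. h x \<le> c + d"
  shows "integral\<^sup>L \<mu> h - integral\<^sup>L \<nu> h
     \<le> d * (measure \<mu> {x\<in>space L. g x < f x} - measure \<nu> {x\<in>space L. g x < f x})"
proof -
  define B where "B = {x\<in>space L. g x < f x}"
  have B[measurable]: "B \<in> sets L" unfolding B_def by measurable
  have "\<bar>h x\<bar> \<le> \<bar>c\<bar> + \<bar>d\<bar>" for x using assms(2,3)[of x] by linarith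
  then have int_h: "integrable L (\<lambda>x. f x * h x)" "integrable L (\<lambda>x. g x * h x)"
    using integrable_density_mult_bounded[OF h] by auto
  have "\<bar>indicator B x :: real\<bar> \<le> 1" for x by (simp add: indicator_def)
  then have int_B: "integrable L (\<lambda>x. f x * indicator B x)" "integrable L (\<lambda>x. g x * indicator B x)"
    using integrable_density_mult_bounded[of "indicator B"] by auto
  have "integral\<^sup>L \<mu> h - integral\<^sup>L \<nu> h = (\<integral>x. (f x - g x) * h x \<partial>L)"
    using int_h by (simp add: integral_mu integral_nu h left_diff_distrib)
  also have "\<dots> \<le> (\<integral>x. d * (f x * indicator B x - g x * indicator B x) + c * (f x - g x) \<partial>L)"
  proof (rule integral_mono)
    show "integrable L (\<lambda>x. (f x - g x) * h x)" using int_h by (simp add: left_diff_distrib)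
    show "integrable L (\<lambda>x. d * (f x * indicator B x - g x * indicator B x) + c * (f x - g x))"
      using int_B integrable_f integrable_g by auto
    fix x assume "x \<in> space L"
    then have "(f x - g x) * h x \<le> (f x - g x) * (if x \<in> B then c + d else c)"
      using assms(2,3)[of x] unfolding B_def
      by (auto intro: mult_left_mono mult_left_mono_neg)
    then show "(f x - g x) * h x \<le> d * (f x * indicator B x - g x * indicator B x) + c * (f x - g x)"
      by (simp add: algebra_simps split: if_splits)
  qed
  also have "\<dots> = d * (measure \<mu> B - measure \<nu> B)"
    using int_B integrable_f integrable_g by (simp add: measure_mu measure_nu integral_f integral_g)
  finally show ?thesis unfolding B_def .
qed

definition overlap :: "'a \<Rightarrow> real" where
  "overlap x = min (f x) (g x)"

lemma overlap_measurable[measurable]: "overlap \<in> borel_measurable L"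
  unfolding overlap_def by measurable

lemma overlap_nonneg: "0 \<le> overlap x" and overlap_le_f: "overlap x \<le> f x"
  unfolding overlap_def using f_nonneg g_nonneg by auto

lemma integrable_overlap: "integrable L overlap"
  by (rule Bochner_Integration.integrable_bound[OF integrable_f])
    (auto simp: overlap_nonneg overlap_le_f f_nonneg intro!: AE_I2)

lemma emeasure_mu: "A \<in> sets L \<Longrightarrow> emeasure \<mu> A = (\<integral>\<^sup>+x. ennreal (f x) * indicator A x \<partial>L)"
  unfolding mu by (simp add: emeasure_density)

lemma emeasure_nu: "A \<in> sets L \<Longrightarrow> emeasure \<nu> A = (\<integral>\<^sup>+x. ennreal (g x) * indicator A x \<partial>L)"
  unfolding nu by (simp add: emeasure_density)

lemma min_measure_eq_density: "min_measure \<mu> \<nu> = density L (\<lambda>x. ennreal (overlap x))"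
  unfolding min_measure_def
proof (rule measure_of_eqI)
  show "sets (density L (\<lambda>x. ennreal (overlap x))) = sets \<mu>" by (simp add: sets_mu)
  fix A assume "A \<in> sets \<mu>"
  then have A[measurable]: "A \<in> sets L" by (simp add: sets_mu)
  have split: "emeasure \<mu> (A \<inter> B) + emeasure \<nu> (A - B) =
     (\<integral>\<^sup>+x. ennreal (f x) * indicator (A \<inter> B) x + ennreal (g x) * indicator (A - B) x \<partial>L)"
    if [measurable]: "B \<in> sets L" for B
    by (simp add: emeasure_mu emeasure_nu nn_integral_add)
  define B0 where "B0 = {x\<in>space L. f x \<le> g x}"
  have [measurable]: "B0 \<in> sets L" unfolding B0_def by measurable
  have "(\<Sqinter>B\<in>sets \<mu>. emeasure \<mu> (A \<inter> B) + emeasure \<nu> (A - B)) = (\<integral>\<^sup>+x. ennreal (overlap x) * indicator A x \<partial>L)"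
  proof (rule antisym)
    show "(\<Sqinter>B\<in>sets \<mu>. emeasure \<mu> (A \<inter> B) + emeasure \<nu> (A - B)) \<le> (\<integral>\<^sup>+x. ennreal (overlap x) * indicator A x \<partial>L)"
      by (rule INF_lower2[of B0]) (auto simp: sets_mu split B0_def overlap_def indicator_def
          intro!: eq_refl nn_integral_cong)
    show "(\<integral>\<^sup>+x. ennreal (overlap x) * indicator A x \<partial>L) \<le> (\<Sqinter>B\<in>sets \<mu>. emeasure \<mu> (A \<inter> B) + emeasure \<nu> (A - B))"
      by (rule INF_greatest) (auto simp: sets_mu split indicator_def overlap_def
          intro!: nn_integral_mono ennreal_leI)
  qed
  then show "(\<Sqinter>B\<in>sets \<mu>. emeasure \<mu> (A \<inter> B) + emeasure \<nu> (A - B))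
      = emeasure (density L (\<lambda>x. ennreal (overlap x))) A"
    by (simp add: emeasure_density)
qed

lemma emeasure_min_measure_space_eq_integral:
  "emeasure (min_measure \<mu> \<nu>) (space L) = ennreal (\<integral>x. overlap x \<partial>L)"
  unfolding min_measure_eq_density by (rule emeasure_density_space) (auto simp: integrable_overlap overlap_nonneg)

lemma measure_min_measure_space_eq_integral:
  "measure (min_measure \<mu> \<nu>) (space L) = (\<integral>x. overlap x \<partial>L)"
  using emeasure_min_measure_space_eq_integral integral_nonneg_AE[of overlap L]
  by (simp add: measure_def overlap_nonneg)

lemma integral_overlap_le_1: "(\<integral>x. overlap x \<partial>L) \<le> 1"
  using integral_mono[OF integrable_overlap integrable_f overlap_le_f] integral_f by simp

lemma residual_measure_eq_density: "residual_measure \<mu> \<nu> = density L (\<lambda>x. ennreal (f x - overlap x))"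
  unfolding residual_measure_def
proof (rule measure_of_eqI)
  show "sets (density L (\<lambda>x. ennreal (f x - overlap x))) = sets \<mu>" by (simp add: sets_mu)
  fix A assume "A \<in> sets \<mu>"
  then have A[measurable]: "A \<in> sets L" by (simp add: sets_mu)
  have "ennreal (f x) * indicator A x
      = ennreal (f x - overlap x) * indicator A x + ennreal (overlap x) * indicator A x" for x
    using overlap_nonneg[of x] overlap_le_f[of x]
    by (simp add: ennreal_plus[symmetric] distrib_right[symmetric] del: ennreal_plus)
  then have mu_split: "emeasure \<mu> A = (\<integral>\<^sup>+x. ennreal (f x - overlap x) * indicator A x \<partial>L)
      + (\<integral>\<^sup>+x. ennreal (overlap x) * indicator A x \<partial>L)"
    by (simp add: emeasure_mu nn_integral_add)
  have "(\<integral>\<^sup>+x. ennreal (overlap x) * indicator A x \<partial>L) \<le> emeasure \<mu> A"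
    unfolding emeasure_mu[OF A]
    by (intro nn_integral_mono) (auto simp: indicator_def overlap_le_f intro: ennreal_leI)
  then have "(\<integral>\<^sup>+x. ennreal (overlap x) * indicator A x \<partial>L) \<noteq> \<infinity>"
    using finite_measure.emeasure_finite[OF prob_space.finite_measure[OF prob_mu]]
    by (auto simp: top_unique)
  then show "emeasure \<mu> A - emeasure (min_measure \<mu> \<nu>) A
      = emeasure (density L (\<lambda>x. ennreal (f x - overlap x))) A"
    unfolding mu_split min_measure_eq_density by (simp add: emeasure_density ennreal_add_diff_cancel_right)
qed

lemma emeasure_residual_measure_space_eq_integral:
  "emeasure (residual_measure \<mu> \<nu>) (space L) = ennreal (1 - (\<integral>x. overlap x \<partial>L))"
proof -
  have "emeasure (residual_measure \<mu> \<nu>) (space L) = ennreal (\<integral>x. f x - overlap x \<partial>L)"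
    unfolding residual_measure_eq_density
    by (rule emeasure_density_space) (auto simp: integrable_f integrable_overlap overlap_le_f)
  also have "(\<integral>x. f x - overlap x \<partial>L) = 1 - (\<integral>x. overlap x \<partial>L)"
    using integrable_f integrable_overlap integral_f by simp
  finally show ?thesis .
qed

lemma measure_diff_le_1_minus_overlap:
  assumes [measurable]: "A \<in> sets L"
  shows "measure \<mu> A - measure \<nu> A \<le> 1 - (\<integral>x. overlap x \<partial>L)"
proof -
  have "\<bar>indicator A x :: real\<bar> \<le> 1" for x by (simp add: indicator_def)
  then have int_A: "integrable L (\<lambda>x. f x * indicator A x)" "integrable L (\<lambda>x. g x * indicator A x)"
    using integrable_density_mult_bounded[of "indicator A"] by auto
  have "measure \<mu> A - measure \<nu> A = (\<integral>x. f x * indicator A x - g x * indicator A x \<partial>L)"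
    using int_A by (simp add: measure_mu measure_nu)
  also have "\<dots> \<le> (\<integral>x. f x - overlap x \<partial>L)"
    using int_A Bochner_Integration.integrable_diff[OF integrable_f integrable_overlap]
    by (intro integral_mono) (auto simp: indicator_def overlap_def g_nonneg)
  finally show ?thesis using integrable_f integrable_overlap integral_f by simp
qed

end

lemma obtain_two_densities:
  assumes "prob_space \<mu>" "prob_space \<nu>" "sets \<nu> = sets \<mu>"
  obtains L f g where "two_densities L f g \<mu> \<nu>" "sets L = sets \<mu>"
proof (rule finite_measures_common_densities[OF prob_space.finite_measure[OF assms(1)]
      prob_space.finite_measure[OF assms(2)] assms(3)])
  fix L f g
  assume L: "finite_measure L" "sets L = sets \<mu>"
    "f \<in> borel_measurable L" "g \<in> borel_measurable L" "\<And>x. f x \<ge> 0" "\<And>x. g x \<ge> 0"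
    "\<mu> = density L (\<lambda>x. ennreal (f x))" "\<nu> = density L (\<lambda>x. ennreal (g x))"
  show thesis
    by (rule that[OF two_densities.intro[OF L(3-8) assms(1,2)] L(2)])
qed

lemma
  fixes \<mu> \<nu> :: "'a measure"
  assumes \<mu>: "prob_space \<mu>" and \<nu>: "prob_space \<nu>" and sets_eq: "sets \<nu> = sets \<mu>"
  defines "\<alpha> \<equiv> measure (min_measure \<mu> \<nu>) (space \<mu>)"
  shows emeasure_min_measure_space: "emeasure (min_measure \<mu> \<nu>) (space \<mu>) = ennreal \<alpha>"
    and measure_min_measure_space_le_1: "\<alpha> \<le> 1"
    and measure_min_measure_space_commute: "measure (min_measure \<nu> \<mu>) (space \<mu>) = \<alpha>"
    and emeasure_residual_measure_space: "emeasure (residual_measure \<mu> \<nu>) (space \<mu>) = ennreal (1 - \<alpha>)"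
    and abs_measure_diff_le_1_minus_measure_min_measure:
      "\<And>A. A \<in> sets \<mu> \<Longrightarrow> \<bar>measure \<mu> A - measure \<nu> A\<bar> \<le> 1 - \<alpha>"
proof -
  obtain L f g where "two_densities L f g \<mu> \<nu>" and sets_L: "sets L = sets \<mu>"
    using obtain_two_densities[OF \<mu> \<nu> sets_eq] .
  interpret A: two_densities L f g \<mu> \<nu> by fact
  interpret B: two_densities L g f \<nu> \<mu> by (rule A.swap)
  have space_L: "space L = space \<mu>" using sets_eq_imp_space_eq[OF sets_L] .
  have overlap_swap: "B.overlap = A.overlap"
    unfolding A.overlap_def B.overlap_def by (auto simp: min.commute)
  have \<alpha>: "\<alpha> = (\<integral>x. A.overlap x \<partial>L)"
    unfolding \<alpha>_def space_L[symmetric] by (rule A.measure_min_measure_space_eq_integral)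
  show "emeasure (min_measure \<mu> \<nu>) (space \<mu>) = ennreal \<alpha>"
    using A.emeasure_min_measure_space_eq_integral by (simp add: \<alpha> space_L)
  show "\<alpha> \<le> 1" using A.integral_overlap_le_1 by (simp add: \<alpha>)
  show "measure (min_measure \<nu> \<mu>) (space \<mu>) = \<alpha>"
    using B.measure_min_measure_space_eq_integral by (simp add: \<alpha> space_L overlap_swap)
  show "emeasure (residual_measure \<mu> \<nu>) (space \<mu>) = ennreal (1 - \<alpha>)"
    using A.emeasure_residual_measure_space_eq_integral by (simp add: \<alpha> space_L)
  fix A assume "A \<in> sets \<mu>"
  then show "\<bar>measure \<mu> A - measure \<nu> A\<bar> \<le> 1 - \<alpha>"
    using A.measure_diff_le_1_minus_overlap B.measure_diff_le_1_minus_overlap sets_L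
    by (fastforce simp: \<alpha> overlap_swap)
qed

lemma abs_integral_diff_le_tv:
  fixes \<mu> \<nu> :: "'a::topological_space measure"
  assumes \<mu>: "\<mu> \<in> space (prob_algebra borel)" and \<nu>: "\<nu> \<in> space (prob_algebra borel)"
    and h: "h \<in> borel_measurable borel" and oscillation: "\<And>y1 y2. \<bar>h y1 - h y2\<bar> \<le> d"
  shows "\<bar>integral\<^sup>L \<mu> h - integral\<^sup>L \<nu> h\<bar> \<le> d * tv \<mu> \<nu>"
proof -
  have prob: "prob_space \<mu>" "prob_space \<nu>" and sets: "sets \<mu> = sets borel" "sets \<nu> = sets borel"
    using \<mu> \<nu> by (auto simp: space_prob_algebra)
  obtain L f g where "two_densities L f g \<mu> \<nu>" and sets_L: "sets L = sets borel"
    using obtain_two_densities[OF prob] sets by auto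
  interpret A: two_densities L f g \<mu> \<nu> by fact
  interpret B: two_densities L g f \<nu> \<mu> by (rule A.swap)
  have h_L: "h \<in> borel_measurable L" using h by (subst measurable_cong_sets[OF sets_L refl])
  obtain c where lower: "\<And>x. c \<le> h x" and upper: "\<And>x. h x \<le> c + d"
    using bounded_oscillation_interval[of h d, OF oscillation] by blast
  have "0 \<le> d" using oscillation[of undefined undefined] by simp
  have le_tv: "d * (measure \<mu> B - measure \<nu> B) \<le> d * tv \<mu> \<nu>"
    "d * (measure \<nu> B - measure \<mu> B) \<le> d * tv \<mu> \<nu>" if "B \<in> sets L" for B
  proof -
    have "\<bar>measure \<mu> B - measure \<nu> B\<bar> \<le> tv \<mu> \<nu>"
      using abs_measure_diff_le_tv[OF prob] that sets_L by simp
    then have "measure \<mu> B - measure \<nu> B \<le> tv \<mu> \<nu>" "measure \<nu> B - measure \<mu> B \<le> tv \<mu> \<nu>"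
      by linarith+
    then show "d * (measure \<mu> B - measure \<nu> B) \<le> d * tv \<mu> \<nu>"
      "d * (measure \<nu> B - measure \<mu> B) \<le> d * tv \<mu> \<nu>"
      using \<open>0 \<le> d\<close> by (simp_all add: mult_left_mono)
  qed
  have B: "{x\<in>space L. g x < f x} \<in> sets L" "{x\<in>space L. f x < g x} \<in> sets L"
    by measurable
  from B(1) have "integral\<^sup>L \<mu> h - integral\<^sup>L \<nu> h \<le> d * tv \<mu> \<nu>"
    by (rule order.trans[OF A.integral_diff_le_oscillation[OF h_L lower upper] le_tv(1)])
  moreover from B(2) have "integral\<^sup>L \<nu> h - integral\<^sup>L \<mu> h \<le> d * tv \<mu> \<nu>"
    by (rule order.trans[OF B.integral_diff_le_oscillation[OF h_L lower upper] le_tv(2)])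
  ultimately show ?thesis by linarith
qed

lemma tv_bind_le:
  fixes \<mu> \<nu> :: "'a::topological_space measure" and Q :: "'a \<Rightarrow> 'b::topological_space measure"
  assumes \<mu>: "\<mu> \<in> space (prob_algebra borel)" and \<nu>: "\<nu> \<in> space (prob_algebra borel)"
    and Q: "Q \<in> borel \<rightarrow>\<^sub>M prob_algebra borel"
    and \<delta>: "\<And>y1 y2. tv (Q y1) (Q y2) \<le> \<delta>"
  shows "tv (bind \<mu> Q) (bind \<nu> Q) \<le> \<delta> * tv \<mu> \<nu>"
proof (rule tv_le)
  fix A :: "'b set" assume A: "A \<in> sets borel"
  have Q_sub: "Q \<in> borel \<rightarrow>\<^sub>M subprob_algebra borel"
    by (rule measurable_prob_algebraD[OF Q])
  have Q_prob: "prob_space (Q y)" for y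
    using measurable_space[OF Q] by (simp add: space_prob_algebra)
  have measure_bind: "measure (bind M Q) A = (\<integral>y. measure (Q y) A \<partial>M)"
    if "M \<in> space (prob_algebra borel)" for M :: "'a measure"
  proof -
    have M: "prob_space M" and sets_M: "sets M = sets borel"
      using that by (auto simp: space_prob_algebra)
    have "Q \<in> M \<rightarrow>\<^sub>M subprob_algebra borel"
      using Q_sub by (subst measurable_cong_sets[OF sets_M refl])
    then show ?thesis
      using subprob_space.measure_bind[OF prob_space_imp_subprob_space[OF M] _ A] by blast
  qed
  have "(\<lambda>y. measure (Q y) A) \<in> borel_measurable borel"
    by (rule measurable_compose[OF Q_sub measurable_measure_subprob_algebra[OF A]])
  moreover have "\<bar>measure (Q y1) A - measure (Q y2) A\<bar> \<le> \<delta>" for y1 y2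
    using abs_measure_diff_le_tv[OF Q_prob[of y1] Q_prob[of y2] A] \<delta>[of y1 y2] by linarith
  ultimately show "\<bar>measure (bind \<mu> Q) A - measure (bind \<nu> Q) A\<bar> \<le> \<delta> * tv \<mu> \<nu>"
    unfolding measure_bind[OF \<mu>] measure_bind[OF \<nu>] by (rule abs_integral_diff_le_tv[OF \<mu> \<nu>])
qed

lemma tv_mstep_mult_le:
  assumes P: "P \<in> borel \<rightarrow>\<^sub>M prob_algebra borel"
    and \<delta>: "\<And>y1 y2. tv (mstep P m y1) (mstep P m y2) \<le> \<delta>"
  shows "tv (mstep P (n * m) x1) (mstep P (n * m) x2) \<le> \<delta> ^ n"
proof (induction n arbitrary: x1 x2)
  case 0
  show ?case using tv_le_1[OF prob_space_mstep[OF P] prob_space_mstep[OF P], of 0 x1 0 x2] by simp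
next
  case (Suc n)
  have "0 \<le> \<delta>"
    using order.trans[OF tv_nonneg[OF prob_space_mstep[OF P] prob_space_mstep[OF P]] \<delta>] .
  have "mstep P (Suc n * m) x = bind (mstep P (n * m) x) (mstep P m)" for x
    using mstep_add[OF P, of "n * m" m x] by (simp add: add.commute)
  then have "tv (mstep P (Suc n * m) x1) (mstep P (Suc n * m) x2)
      \<le> \<delta> * tv (mstep P (n * m) x1) (mstep P (n * m) x2)"
    using tv_bind_le[OF mstep_in_prob_algebra[OF P] mstep_in_prob_algebra[OF P]
        mstep_measurable[OF P] \<delta>] by simp
  also have "\<dots> \<le> \<delta> * \<delta> ^ n"
    using Suc.IH \<open>0 \<le> \<delta>\<close> by (rule mult_left_mono)
  finally show ?case by simp
qed

lemma
  assumes P: "P \<in> borel \<rightarrow>\<^sub>M prob_algebra borel"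
  shows alpha_nonneg: "0 \<le> alpha P m x1 x2" and alpha_le_1: "alpha P m x1 x2 \<le> 1"
    and tv_mstep_le_1_minus_alpha: "tv (mstep P m x1) (mstep P m x2) \<le> 1 - alpha P m x1 x2"
proof -
  have alpha: "alpha P m x1 x2 = measure (min_measure (mstep P m x1) (mstep P m x2)) (space (mstep P m x1))"
    by (simp add: alpha_def space_mstep[OF P])
  have "sets (mstep P m x2) = sets (mstep P m x1)" by (simp add: sets_mstep[OF P])
  note prems = prob_space_mstep[OF P] prob_space_mstep[OF P] this
  show "0 \<le> alpha P m x1 x2" by (simp add: alpha_def)
  show "alpha P m x1 x2 \<le> 1"
    unfolding alpha by (rule measure_min_measure_space_le_1[OF prems])
  show "tv (mstep P m x1) (mstep P m x2) \<le> 1 - alpha P m x1 x2"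
    unfolding alpha using abs_measure_diff_le_1_minus_measure_min_measure[OF prems]
    by (intro tv_le) (simp add: sets_mstep[OF P])
qed

lemma emeasure_residual_product_space:
  assumes \<mu>: "prob_space \<mu>" and \<nu>: "prob_space \<nu>" and sets_eq: "sets \<nu> = sets \<mu>"
  defines "\<alpha> \<equiv> measure (min_measure \<mu> \<nu>) (space \<mu>)"
  shows "emeasure (residual_measure \<mu> \<nu> \<Otimes>\<^sub>M residual_measure \<nu> \<mu>)
      (space (residual_measure \<mu> \<nu> \<Otimes>\<^sub>M residual_measure \<nu> \<mu>)) = ennreal (1 - \<alpha>) * ennreal (1 - \<alpha>)"
proof -
  have space_eq: "space \<nu> = space \<mu>" using sets_eq_imp_space_eq[OF sets_eq] .
  have mass: "emeasure (residual_measure \<mu> \<nu>) (space \<mu>) = ennreal (1 - \<alpha>)"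
      "emeasure (residual_measure \<nu> \<mu>) (space \<mu>) = ennreal (1 - \<alpha>)"
    using emeasure_residual_measure_space[OF \<mu> \<nu> sets_eq]
      emeasure_residual_measure_space[OF \<nu> \<mu> sets_eq[symmetric]]
      measure_min_measure_space_commute[OF \<nu> \<mu> sets_eq[symmetric]]
    by (simp_all add: \<alpha>_def space_eq)
  then have "finite_measure (residual_measure \<nu> \<mu>)"
    by (intro finite_measureI) (simp add: space_residual_measure space_eq)
  then show ?thesis
    using emeasure_pair_measure_space[of "residual_measure \<nu> \<mu>" "residual_measure \<mu> \<nu>"]
    by (simp add: space_residual_measure space_eq mass)
qed

lemma coupling_weights_sum:
  fixes a :: real
  assumes "0 \<le> a" "a \<le> 1"
  shows "(if 0 < a then 1 else 0) * ennreal a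
     + (if a < 1 then ennreal (1 / (1 - a)) else 0) * (ennreal (1 - a) * ennreal (1 - a)) = 1"
proof (cases "0 < a \<and> a < 1")
  case True
  then have "ennreal (1 / (1 - a)) * (ennreal (1 - a) * ennreal (1 - a)) = ennreal (1 - a)"
    by (simp add: ennreal_mult[symmetric])
  then show ?thesis using True by (simp add: ennreal_plus[symmetric] del: ennreal_plus)
next
  case False
  then have "a = 0 \<or> a = 1" using assms by auto
  then show ?thesis by auto
qed

lemma prob_space_coupling_mixture:
  fixes \<mu>1 \<mu>2 :: "'a::topological_space measure"
  assumes prob: "prob_space \<mu>1" "prob_space \<mu>2" and sets: "sets \<mu>1 = sets borel" "sets \<mu>2 = sets borel"
  defines "a \<equiv> measure (min_measure \<mu>1 \<mu>2) (space borel)"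
  shows "prob_space (measure_of (space (borel \<Otimes>\<^sub>M borel)) (sets (borel \<Otimes>\<^sub>M borel))
     (\<lambda>C. (if a > 0 then emeasure (distr (min_measure \<mu>1 \<mu>2) (borel \<Otimes>\<^sub>M borel) (\<lambda>y. (y, y))) C else 0)
        + (if a < 1 then ennreal (1 / (1 - a)) *
             emeasure (residual_measure \<mu>1 \<mu>2 \<Otimes>\<^sub>M residual_measure \<mu>2 \<mu>1) C
           else 0)))"
    (is "prob_space ?K")
proof -
  let ?B2 = "borel \<Otimes>\<^sub>M borel :: ('a \<times> 'a) measure"
  define D1 where "D1 = distr (min_measure \<mu>1 \<mu>2) ?B2 (\<lambda>y. (y, y))"
  define D2 where "D2 = residual_measure \<mu>1 \<mu>2 \<Otimes>\<^sub>M residual_measure \<mu>2 \<mu>1"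
  have sets21: "sets \<mu>2 = sets \<mu>1" using sets by simp
  have space: "space \<mu>1 = space borel" "space \<mu>2 = space borel"
    using sets_eq_imp_space_eq[OF sets(1)] sets_eq_imp_space_eq[OF sets(2)] by auto
  have a: "a = measure (min_measure \<mu>1 \<mu>2) (space \<mu>1)"
    by (simp add: a_def space)
  have "0 \<le> a" "a \<le> 1"
    using measure_min_measure_space_le_1[OF prob sets21] by (auto simp: a)
  have sets_D1: "sets D1 = sets ?B2" unfolding D1_def by simp
  have sets_D2: "sets D2 = sets ?B2"
    unfolding D2_def by (rule sets_pair_measure_cong) (simp_all add: sets_residual_measure sets)
  have mass_D1: "emeasure D1 (space ?B2) = ennreal a"
    unfolding D1_def using emeasure_min_measure_space[OF prob sets21]
    by (simp add: emeasure_diagonal_space sets_min_measure space_min_measure sets a)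
  have "emeasure D2 (space D2) = ennreal (1 - a) * ennreal (1 - a)"
    unfolding D2_def a using emeasure_residual_product_space[OF prob sets21] .
  then have mass_D2: "emeasure D2 (space ?B2) = ennreal (1 - a) * ennreal (1 - a)"
    using sets_eq_imp_space_eq[OF sets_D2] by simp
  have K: "?K = measure_of (space ?B2) (sets ?B2)
      (\<lambda>C. (if 0 < a then 1 else 0) * emeasure D1 C
         + (if a < 1 then ennreal (1 / (1 - a)) else 0) * emeasure D2 C)"
    by (simp add: D1_def D2_def)
  have "emeasure ?K (space ?K) = 1"
    unfolding K using coupling_weights_sum \<open>0 \<le> a\<close> \<open>a \<le> 1\<close>
    by (simp add: emeasure_measure_of_linear_combination[OF sets_D1 sets_D2] mass_D1 mass_D2)
  then show ?thesis by (rule prob_spaceI)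
qed

lemma prob_space_Kcoup:
  fixes P :: "'a::topological_space \<Rightarrow> 'a measure"
  assumes P: "P \<in> borel \<rightarrow>\<^sub>M prob_algebra borel"
  shows "prob_space (Kcoup P m z)"
proof (cases "fst z = snd z")
  case True
  have "(\<lambda>y. (y, y)) \<in> mstep P m (fst z) \<rightarrow>\<^sub>M (borel \<Otimes>\<^sub>M borel :: ('a \<times> 'a) measure)"
    by (subst measurable_cong_sets[OF sets_mstep[OF P] refl]) measurable
  then show ?thesis
    using prob_space.prob_space_distr[OF prob_space_mstep[OF P]] True by (simp add: Kcoup_def)
next
  case False
  show ?thesis
    unfolding Kcoup_def Let_def alpha_def if_not_P[OF False]
    by (rule prob_space_coupling_mixture[OF prob_space_mstep[OF P] prob_space_mstep[OF P]
          sets_mstep[OF P] sets_mstep[OF P]])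
qed

lemma abs_Vop_le_1:
  assumes P: "P \<in> borel \<rightarrow>\<^sub>M prob_algebra borel" and h: "\<And>y. \<bar>h y\<bar> \<le> (1::real)"
  shows "\<bar>Vop P m h z\<bar> \<le> 1"
proof -
  have "0 \<le> 1 - alpha P m (fst z) (snd z)" "1 - alpha P m (fst z) (snd z) \<le> 1"
    using alpha_nonneg[OF P] alpha_le_1[OF P] by auto
  then show ?thesis
    unfolding Vop_def abs_mult
    using abs_integral_le_1[OF prob_space_Kcoup[OF P] h] by (simp add: mult_le_one)
qed

lemma abs_Vop_le_Vnorm:
  assumes P: "P \<in> borel \<rightarrow>\<^sub>M prob_algebra borel"
    and "h \<in> borel_measurable (borel \<Otimes>\<^sub>M borel)" and "\<And>y. \<bar>h y\<bar> \<le> 1"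
  shows "\<bar>Vop P m h z\<bar> \<le> Vnorm P m"
  unfolding Vnorm_def
proof (rule cSup_upper)
  show "\<bar>Vop P m h z\<bar> \<in> {\<bar>Vop P m h z\<bar> | h z.
      h \<in> borel_measurable (borel \<Otimes>\<^sub>M borel) \<and> (\<forall>y. \<bar>h y\<bar> \<le> 1)}"
    using assms(2,3) by blast
  show "bdd_above {\<bar>Vop P m h z\<bar> | h z.
      h \<in> borel_measurable (borel \<Otimes>\<^sub>M borel) \<and> (\<forall>y. \<bar>h y\<bar> \<le> 1)}"
    using abs_Vop_le_1[OF P] by (intro bdd_aboveI[where M=1]) blast
qed

lemma Vop_const_1:
  assumes P: "P \<in> borel \<rightarrow>\<^sub>M prob_algebra borel"
  shows "Vop P m (\<lambda>_. 1) z = 1 - alpha P m (fst z) (snd z)"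
  using prob_space.prob_space[OF prob_space_Kcoup[OF P]] by (simp add: Vop_def)

lemma tv_mstep_le_Vnorm:
  fixes P :: "'a::topological_space \<Rightarrow> 'a measure"
  assumes P: "P \<in> borel \<rightarrow>\<^sub>M prob_algebra borel"
  shows "tv (mstep P m y1) (mstep P m y2) \<le> Vnorm P m"
proof -
  have Vop_le: "\<bar>Vop P m (\<lambda>_. 1) z\<bar> \<le> Vnorm P m" for z
    by (rule abs_Vop_le_Vnorm[OF P]) auto
  show ?thesis
  proof (cases "y1 = y2")
    case True
    then have "tv (mstep P m y1) (mstep P m y2) \<le> 0" by (intro tv_le) simp
    then show ?thesis using Vop_le[of "(y1, y2)"] by linarith
  next
    case False
    have "tv (mstep P m y1) (mstep P m y2) \<le> 1 - alpha P m y1 y2"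
      by (rule tv_mstep_le_1_minus_alpha[OF P])
    also have "\<dots> = Vop P m (\<lambda>_. 1) (y1, y2)" by (simp add: Vop_const_1[OF P])
    finally show ?thesis using Vop_le[of "(y1, y2)"] by linarith
  qed
qed

theorem corollary1:
  fixes P :: "'a::topological_space \<Rightarrow> 'a measure" and m n :: nat and x1 x2 :: 'a
  assumes "P \<in> borel \<rightarrow>\<^sub>M prob_algebra borel"
    and "m \<ge> 1"
  shows "1/2 * tv (mstep P (n * m) x1) (mstep P (n * m) x2) \<le> (Vnorm P m) ^ n"
proof -
  have "tv (mstep P (n * m) x1) (mstep P (n * m) x2) \<le> (Vnorm P m) ^ n"
    using tv_mstep_mult_le[OF assms(1) tv_mstep_le_Vnorm[OF assms(1)]] .
  moreover have "0 \<le> tv (mstep P (n * m) x1) (mstep P (n * m) x2)"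
    using tv_nonneg[OF prob_space_mstep[OF assms(1)] prob_space_mstep[OF assms(1)]] .
  ultimately show ?thesis by linarith
qed

end
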